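(* Let $n\geq 1$ and $\lambda>0$. The following are equivalent: (1) for every $\lambda$-concave body $K\subset\mathbb{R}^{n+1}$ and every triple $0\leq i<j<k\leq n+1$ one has $(k-j)\lambda^{-i}W_i(K)+(i-k)\lambda^{-j}W_j(K)+(j-i)\lambda^{-k}W_k(K)\geq 0$, with equality if and only if $K$ is a $\lambda$-sausage body; (2) for every $\lambda$-concave body $K\subset\mathbb{R}^{n+1}$ and every integer $l$ with $0\leq l\leq n-1$ one has $\lambda^{-l}W_l(K)-2\lambda^{-(l+1)}W_{l+1}(K)+\lambda^{-(l+2)}W_{l+2}(K)\geq 0$, with equality if and only if $K$ is a $\lambda$-sausage body.
   Context: A convex body is a compact convex set with non-empty interior; balls are closed. For $\lambda>0$, a convex body $K\subset\mathbb{R}^{n+1}$ is $\lambda$-concave if for every $p\in\partial K$ there is a ball of radius $1/\lambda$ whose boundary passes through $p$ and which, intersected with some open neighborhood $U(p)$ of $p$, is contained in $K\cap U(p)$. A $\lambda$-sausage body is the convex hull of two (possibly coinciding) balls of radius $1/\lambda$. The quermassintegrals $W_i(K)$ are defined by the Steiner formula $\mathrm{Vol}_{n+1}(K+tB)=\sum_{i=0}^{n+1}\binom{n+1}{i}W_i(K)t^i$, $t\geq0$, with $B$ the unit ball and $+$ Minkowski addition. *)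

theory Defs
  imports "HOL-Analysis.Analysis"
begin

definition convex_body :: "'a::euclidean_space set \<Rightarrow> bool" where
  "convex_body K \<longleftrightarrow> compact K \<and> convex K \<and> interior K \<noteq> {}"

definition lambda_concave :: "real \<Rightarrow> 'a::euclidean_space set \<Rightarrow> bool" where
  "lambda_concave lam K \<longleftrightarrow> convex_body K \<and>
     (\<forall>p\<in>frontier K. \<exists>c U. p \<in> sphere c (1 / lam) \<and> open U \<and> p \<in> U \<and>
        cball c (1 / lam) \<inter> U \<subseteq> K \<inter> U)"

definition lambda_sausage :: "real \<Rightarrow> 'a::euclidean_space set \<Rightarrow> bool" where
  "lambda_sausage lam K \<longleftrightarrow>
     (\<exists>a b. K = convex hull (cball a (1 / lam) \<union> cball b (1 / lam)))"

text \<open>Quermassintegrals via the Steiner formula in dimension DIM('a):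
  Vol(K + tB) = sum_{i=0}^{DIM('a)} (DIM('a) choose i) W_i(K) t^i for t \<ge> 0.\<close>
definition quermass :: "'a::euclidean_space set \<Rightarrow> nat \<Rightarrow> real" where
  "quermass K = (THE W. (\<forall>t\<ge>0. measure lebesgue {x + y | x y. x \<in> K \<and> y \<in> cball 0 t}
        = (\<Sum>i\<le>DIM('a). real (DIM('a) choose i) * W i * t ^ i))
      \<and> (\<forall>i>DIM('a). W i = 0))"

end

theory Submission
  imports Defs
begin

text \<open>Both conditions only concern the sequence \<open>a m = \<lambda>\<^sup>-\<^sup>m W\<^sub>m(K)\<close>: (2) says that its
  second differences are nonnegative and vanish exactly for sausage bodies, (1) says the same
  of the three-point expressions. Nonnegative second differences make the first differences
  nondecreasing, which bounds the three-point expression at \<open>i < j < k\<close> from below by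
  \<open>(k - j)(j - i)\<close> times the second difference at \<open>j - 1\<close>; vanishing second differences
  make the three-point expressions of both \<open>a\<close> and \<open>-a\<close> nonnegative, hence zero.
  Conversely (2) is the case \<open>(i, j, k) = (l, l + 1, l + 2)\<close> of (1).
  In particular neither the geometry of \<open>K\<close> nor the dimension plays any role.\<close>

definition second_diff :: "(nat \<Rightarrow> real) \<Rightarrow> nat \<Rightarrow> real" where
  "second_diff a l = a l - 2 * a (l + 1) + a (l + 2)"

text \<open>\<open>(k - i)\<close> times the height of the chord of \<open>a\<close> from \<open>i\<close> to \<open>k\<close> above the value \<open>a j\<close>.\<close>
definition chord_gap :: "(nat \<Rightarrow> real) \<Rightarrow> nat \<Rightarrow> nat \<Rightarrow> nat \<Rightarrow> real" where
  "chord_gap a i j k = (real k - real j) * a i + (real i - real k) * a j + (real j - real i) * a k"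

lemma second_diff_uminus: "second_diff (\<lambda>m. - a m) l = - second_diff a l"
  by (simp add: second_diff_def)

lemma chord_gap_uminus: "chord_gap (\<lambda>m. - a m) i j k = - chord_gap a i j k"
  by (simp add: chord_gap_def algebra_simps)

lemma forward_diff_mono:
  assumes convex: "\<And>l. i \<le> l \<Longrightarrow> l + 2 \<le> k \<Longrightarrow> second_diff a l \<ge> 0"
    and "i \<le> m" "m \<le> m'" "m' < k"
  shows "a (m + 1) - a m \<le> a (m' + 1) - a m'"
  using \<open>m \<le> m'\<close> \<open>m' < k\<close>
proof (induction m' rule: dec_induct)
  case base
  then show ?case by simp
next
  case (step p)
  have "a (m + 1) - a m \<le> a (p + 1) - a p"
    using step by simp
  also have "\<dots> \<le> a (p + 2) - a (p + 1)"
    using convex[of p] step.hyps \<open>i \<le> m\<close> step.prems by (simp add: second_diff_def)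
  finally show ?case
    by (simp add: numeral_2_eq_2)
qed

lemma chord_gap_ge_second_diff:
  assumes "i < j" "j < k"
    and convex: "\<And>l. i \<le> l \<Longrightarrow> l + 2 \<le> k \<Longrightarrow> second_diff a l \<ge> 0"
  shows "chord_gap a i j k \<ge> (real k - real j) * (real j - real i) * second_diff a (j - 1)"
proof -
  have left: "a j - a i \<le> (real j - real i) * (a j - a (j - 1))"
  proof -
    have "a j - a i = (\<Sum>m=i..<j. a (m + 1) - a m)"
      using sum_Suc_diff'[of i j a] \<open>i < j\<close> by simp
    also have "\<dots> \<le> (\<Sum>m=i..<j. a (j - 1 + 1) - a (j - 1))"
      by (intro sum_mono forward_diff_mono[OF convex]) (use assms in auto)
    finally show ?thesis
      using \<open>i < j\<close> by (simp add: of_nat_diff)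
  qed
  have right: "(real k - real j) * (a (j + 1) - a j) \<le> a k - a j"
  proof -
    have "(real k - real j) * (a (j + 1) - a j) = (\<Sum>m=j..<k. a (j + 1) - a j)"
      using \<open>j < k\<close> by (simp add: of_nat_diff)
    also have "\<dots> \<le> (\<Sum>m=j..<k. a (m + 1) - a m)"
      by (intro sum_mono forward_diff_mono[OF convex]) (use assms in auto)
    also have "\<dots> = a k - a j"
      using sum_Suc_diff'[of j k a] \<open>j < k\<close> by simp
    finally show ?thesis .
  qed
  have "(real j - real i) * ((real k - real j) * (a (j + 1) - a j)) \<le> (real j - real i) * (a k - a j)"
    using right assms(1) by (intro mult_left_mono) auto
  moreover have "(real k - real j) * (a j - a i) \<le> (real k - real j) * ((real j - real i) * (a j - a (j - 1)))"
    using left assms(2) by (intro mult_left_mono) auto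
  moreover have "chord_gap a i j k = (real j - real i) * (a k - a j) - (real k - real j) * (a j - a i)"
    by (simp add: chord_gap_def algebra_simps)
  moreover have "(real j - real i) * ((real k - real j) * (a (j + 1) - a j))
      - (real k - real j) * ((real j - real i) * (a j - a (j - 1)))
      = (real k - real j) * (real j - real i) * second_diff a (j - 1)"
    using \<open>i < j\<close> by (cases j) (simp_all add: second_diff_def algebra_simps)
  ultimately show ?thesis
    by linarith
qed

lemma chord_gap_nonneg:
  assumes "i < j" "j < k"
    and convex: "\<And>l. i \<le> l \<Longrightarrow> l + 2 \<le> k \<Longrightarrow> second_diff a l \<ge> 0"
  shows "chord_gap a i j k \<ge> 0"
proof -
  have "second_diff a (j - 1) \<ge> 0"
    using assms(1,2) by (intro convex) auto
  then have "(real k - real j) * (real j - real i) * second_diff a (j - 1) \<ge> 0"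
    using assms(1,2) by simp
  then show ?thesis
    using chord_gap_ge_second_diff[OF assms] by linarith
qed

lemma chord_gap_eq_0:
  assumes "i < j" "j < k" and affine: "\<And>l. i \<le> l \<Longrightarrow> l + 2 \<le> k \<Longrightarrow> second_diff a l = 0"
  shows "chord_gap a i j k = 0"
proof -
  have "chord_gap a i j k \<ge> 0"
    using assms(1,2) by (rule chord_gap_nonneg) (simp add: affine)
  moreover have "chord_gap (\<lambda>m. - a m) i j k \<ge> 0"
    using assms(1,2) by (rule chord_gap_nonneg) (simp add: affine second_diff_uminus)
  ultimately show ?thesis
    by (simp add: chord_gap_uminus)
qed

lemma chord_gap_eq_0_imp_second_diff_eq_0:
  assumes "i < j" "j < k"
    and convex: "\<And>l. i \<le> l \<Longrightarrow> l + 2 \<le> k \<Longrightarrow> second_diff a l \<ge> 0"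
    and "chord_gap a i j k = 0"
  shows "second_diff a (j - 1) = 0"
proof -
  have "second_diff a (j - 1) \<ge> 0"
    using assms(1,2) by (intro convex) auto
  moreover have "(real k - real j) * (real j - real i) * second_diff a (j - 1) \<le> 0"
    using chord_gap_ge_second_diff[OF assms(1-3)] assms(4) by simp
  ultimately show ?thesis
    using assms(1,2) by (simp add: mult_le_0_iff)
qed

lemma all_chord_gaps_iff_all_second_diffs:
  fixes a :: "nat \<Rightarrow> real"
  shows "(\<forall>i j k. i < j \<and> j < k \<and> k \<le> N \<longrightarrow> chord_gap a i j k \<ge> 0 \<and> (chord_gap a i j k = 0 \<longleftrightarrow> P))
     \<longleftrightarrow> (\<forall>l. l + 2 \<le> N \<longrightarrow> second_diff a l \<ge> 0 \<and> (second_diff a l = 0 \<longleftrightarrow> P))"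
  (is "?chords \<longleftrightarrow> ?diffs")
proof
  assume chords: ?chords
  show ?diffs
  proof (intro allI impI)
    fix l
    assume "l + 2 \<le> N"
    moreover have "chord_gap a l (l + 1) (l + 2) = second_diff a l"
      by (simp add: chord_gap_def second_diff_def)
    ultimately show "second_diff a l \<ge> 0 \<and> (second_diff a l = 0 \<longleftrightarrow> P)"
      using chords[rule_format, of l "l + 1" "l + 2"] by simp
  qed
next
  assume diffs: ?diffs
  show ?chords
  proof (intro allI impI)
    fix i j k
    assume "i < j \<and> j < k \<and> k \<le> N"
    then have "i < j" "j < k" and convex: "\<And>l. i \<le> l \<Longrightarrow> l + 2 \<le> k \<Longrightarrow> second_diff a l \<ge> 0"
      and diff_0_iff: "\<And>l. l + 2 \<le> k \<Longrightarrow> second_diff a l = 0 \<longleftrightarrow> P"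
      using diffs by auto
    have "chord_gap a i j k = 0" if P
      using chord_gap_eq_0[OF \<open>i < j\<close> \<open>j < k\<close>] diff_0_iff \<open>P\<close> by blast
    moreover have P if "chord_gap a i j k = 0"
      using chord_gap_eq_0_imp_second_diff_eq_0[OF \<open>i < j\<close> \<open>j < k\<close> convex that]
        diff_0_iff[of "j - 1"] \<open>i < j\<close> \<open>j < k\<close> by simp
    ultimately show "chord_gap a i j k \<ge> 0 \<and> (chord_gap a i j k = 0 \<longleftrightarrow> P)"
      using chord_gap_nonneg[OF \<open>i < j\<close> \<open>j < k\<close> convex] by blast
  qed
qed

theorem lemma3p1:
  fixes n :: nat and lam :: real
  assumes "n \<ge> 1" and "DIM('a::euclidean_space) = n + 1" and "lam > 0"
  shows "(\<forall>(K::'a set) i j k. lambda_concave lam K \<and> i < j \<and> j < k \<and> k \<le> n + 1 \<longrightarrow>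
            (let f = (real k - real j) * inverse lam ^ i * quermass K i
                   + (real i - real k) * inverse lam ^ j * quermass K j
                   + (real j - real i) * inverse lam ^ k * quermass K k
             in f \<ge> 0 \<and> (f = 0 \<longleftrightarrow> lambda_sausage lam K)))
     \<longleftrightarrow>
         (\<forall>(K::'a set) l. lambda_concave lam K \<and> l \<le> n - 1 \<longrightarrow>
            (let f = inverse lam ^ l * quermass K l
                   - 2 * inverse lam ^ (l + 1) * quermass K (l + 1)
                   + inverse lam ^ (l + 2) * quermass K (l + 2)
             in f \<ge> 0 \<and> (f = 0 \<longleftrightarrow> lambda_sausage lam K)))"
proof -
  define a where "a K m = inverse lam ^ m * quermass K m" for K :: "'a set" and m
  have "l \<le> n - 1 \<longleftrightarrow> l + 2 \<le> n + 1" for l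
    using \<open>n \<ge> 1\<close> by linarith
  then have "(\<forall>i j k. i < j \<and> j < k \<and> k \<le> n + 1 \<longrightarrow>
               chord_gap (a K) i j k \<ge> 0 \<and> (chord_gap (a K) i j k = 0 \<longleftrightarrow> lambda_sausage lam K))
           \<longleftrightarrow> (\<forall>l. l \<le> n - 1 \<longrightarrow>
               second_diff (a K) l \<ge> 0 \<and> (second_diff (a K) l = 0 \<longleftrightarrow> lambda_sausage lam K))" for K
    using all_chord_gaps_iff_all_second_diffs by presburger
  then show ?thesis
    unfolding chord_gap_def second_diff_def a_def Let_def mult.assoc by blast
qed

end
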